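(* Let \((Q, \preccurlyeq_{Q})\) be a totally ordered set having a smallest element and satisfying \(|Q| > 1\). Then the following conditions are equivalent. (i) The order topology of \((Q,\preccurlyeq_Q)\) is separable. (ii) For every \(\preccurlyeq_{Q}\)-pseudoultrametric \(d\) there is a \(\preccurlyeq_{\mathbb{R}_{0}}\)-pseudoultrametric \(\rho\) such that \(d\) and \(\rho\) are weakly similar. (iii) For every \(\preccurlyeq_{Q}\)-pseudoultrametric \(d\) there is a \(\preccurlyeq_{\mathbb{R}_{0}}\)-pseudoultrametric \(\rho\) such that \(d\) and \(\rho\) are combinatorially similar.
   Context: \(\mathbb{R}_0:=[0,\infty)\times\{0,1\}\) with the lexicographic linear order: \(\langle a,b\rangle\preccurlyeq_{\mathbb{R}_0}\langle c,e\rangle\) iff \(a<c\), or \(a=c\) and \(b\le e\); its smallest element is \(\langle 0,0\rangle\). The order topology on a totally ordered \((Q,\preccurlyeq_Q)\) is the topology with subbase consisting of all sets \(\{q: q\prec_Q a\}\) and \(\{q: a\prec_Q q\}\), \(a\in Q\); a space is separable if it has a countable subset meeting every nonempty open set. For a poset \((P,\preccurlyeq_P)\) with smallest element \(p_0\), \(d\colon X^2\to P\) (\(X\) nonempty) is a \(\preccurlyeq_P\)-pseudoultrametric if \(d\) is symmetric, \(d(x,x)=p_0\) for all \(x\), and for every triple \(\langle x_1,x_2,x_3\rangle\) in \(X\) there is a permutation \((i_1,i_2,i_3)\) of \((1,2,3)\) with \(d(x_{i_1},x_{i_3})\preccurlyeq_P d(x_{i_1},x_{i_2})=d(x_{i_2},x_{i_3})\).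 For a \(\preccurlyeq_Q\)-pseudoultrametric \(d\) on \(X\) and a \(\preccurlyeq_{\mathbb{R}_0}\)-pseudoultrametric \(\rho\) on \(Y\): they are combinatorially similar if there are bijections \(h\colon X\to Y\), \(f\colon d(X^2)\to\rho(Y^2)\) with \(\rho(h(x),h(y))=f(d(x,y))\) for all \(x,y\in X\); they are weakly similar if this holds with \(f\) an order isomorphism between the subposets \(d(X^2)\subseteq Q\) and \(\rho(Y^2)\subseteq\mathbb{R}_0\). *)

theory Defs
  imports "HOL-Analysis.Analysis"
begin

text \<open>The totally ordered set R_0 = [0,oo) x {0,1}, with {0,1} rendered as bool (False < True),
  and its lexicographic order.\<close>

definition R0 :: "(real \<times> bool) set" where
  "R0 = {p. fst p \<ge> 0}"

definition le_R0 :: "real \<times> bool \<Rightarrow> real \<times> bool \<Rightarrow> bool" where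
  "le_R0 p q \<longleftrightarrow> fst p < fst q \<or> (fst p = fst q \<and> snd p \<le> snd q)"

definition order_topology_of :: "'a::linorder topology" where
  "order_topology_of = topology_generated_by ({{q. q < a} | a. True} \<union> {{q. a < q} | a. True})"

definition separable_topology :: "'a topology \<Rightarrow> bool" where
  "separable_topology T \<longleftrightarrow>
     (\<exists>D. countable D \<and> D \<subseteq> topspace T \<and> (\<forall>U. openin T U \<and> U \<noteq> {} \<longrightarrow> D \<inter> U \<noteq> {}))"

definition pseudoultrametric ::
  "('p \<Rightarrow> 'p \<Rightarrow> bool) \<Rightarrow> 'p set \<Rightarrow> 'x set \<Rightarrow> ('x \<Rightarrow> 'x \<Rightarrow> 'p) \<Rightarrow> bool" where
  "pseudoultrametric le P X d \<longleftrightarrow>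
     X \<noteq> {} \<and>
     (\<forall>x\<in>X. \<forall>y\<in>X. d x y \<in> P) \<and>
     (\<forall>x\<in>X. \<forall>y\<in>X. d x y = d y x) \<and>
     (\<forall>x\<in>X. \<forall>p\<in>P. le (d x x) p) \<and>
     (\<forall>x1\<in>X. \<forall>x2\<in>X. \<forall>x3\<in>X.
        (le (d x1 x3) (d x1 x2) \<and> d x1 x2 = d x2 x3) \<or>
        (le (d x1 x2) (d x1 x3) \<and> d x1 x3 = d x3 x2) \<or>
        (le (d x2 x3) (d x2 x1) \<and> d x2 x1 = d x1 x3) \<or>
        (le (d x2 x1) (d x2 x3) \<and> d x2 x3 = d x3 x1) \<or>
        (le (d x3 x2) (d x3 x1) \<and> d x3 x1 = d x1 x2) \<or>
        (le (d x3 x1) (d x3 x2) \<and> d x3 x2 = d x2 x1))"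

definition comb_similar ::
  "'x set \<Rightarrow> ('x \<Rightarrow> 'x \<Rightarrow> 'q) \<Rightarrow> 'y set \<Rightarrow> ('y \<Rightarrow> 'y \<Rightarrow> 'r) \<Rightarrow> bool" where
  "comb_similar X d Y \<rho> \<longleftrightarrow>
     (\<exists>h f. bij_betw h X Y \<and>
            bij_betw f ((\<lambda>(x, y). d x y) ` (X \<times> X)) ((\<lambda>(x, y). \<rho> x y) ` (Y \<times> Y)) \<and>
            (\<forall>x\<in>X. \<forall>y\<in>X. \<rho> (h x) (h y) = f (d x y)))"

definition weak_similar ::
  "'x set \<Rightarrow> ('x \<Rightarrow> 'x \<Rightarrow> 'q::order) \<Rightarrow> 'y set \<Rightarrow> ('y \<Rightarrow> 'y \<Rightarrow> real \<times> bool) \<Rightarrow> bool" where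
  "weak_similar X d Y \<rho> \<longleftrightarrow>
     (\<exists>h f. bij_betw h X Y \<and>
            bij_betw f ((\<lambda>(x, y). d x y) ` (X \<times> X)) ((\<lambda>(x, y). \<rho> x y) ` (Y \<times> Y)) \<and>
            (\<forall>a\<in>(\<lambda>(x, y). d x y) ` (X \<times> X). \<forall>b\<in>(\<lambda>(x, y). d x y) ` (X \<times> X).
               a \<le> b \<longleftrightarrow> le_R0 (f a) (f b)) \<and>
            (\<forall>x\<in>X. \<forall>y\<in>X. \<rho> (h x) (h y) = f (d x y)))"

text \<open>Conditions (ii) and (iii), for pseudoultrametric spaces whose points live in type 'x.\<close>

definition cond_weak :: "'x itself \<Rightarrow> 'q::linorder itself \<Rightarrow> bool" where
  "cond_weak _ _ \<longleftrightarrow>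
     (\<forall>(X::'x set) (d::'x \<Rightarrow> 'x \<Rightarrow> 'q). pseudoultrametric (\<le>) UNIV X d \<longrightarrow>
        (\<exists>(Y::'x set) \<rho>. pseudoultrametric le_R0 R0 Y \<rho> \<and> weak_similar X d Y \<rho>))"

definition cond_comb :: "'x itself \<Rightarrow> 'q::linorder itself \<Rightarrow> bool" where
  "cond_comb _ _ \<longleftrightarrow>
     (\<forall>(X::'x set) (d::'x \<Rightarrow> 'x \<Rightarrow> 'q). pseudoultrametric (\<le>) UNIV X d \<longrightarrow>
        (\<exists>(Y::'x set) \<rho>. pseudoultrametric le_R0 R0 Y \<rho> \<and> comb_similar X d Y \<rho>))"

end

theory Submission
  imports Defs
begin

text \<open>If the order topology of \<open>Q\<close> is separable, fix a sequence \<open>e\<close> meeting every nonempty open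
  interval. Then \<open>q \<mapsto> (\<Sum>{2\<^sup>-\<^sup>n | e n < q}, some [p, q) misses e)\<close> is an order embedding of \<open>Q\<close>
  into \<open>\<real>\<^sub>0\<close> mapping the least element to \<open>\<langle>0,0\<rangle>\<close>, and composing a \<open>Q\<close>-valued
  pseudoultrametric with it gives a weakly similar \<open>\<real>\<^sub>0\<close>-valued one on the same set.

  Conversely, \<open>d(a, b) = max a b\<close> (for \<open>a \<noteq> b\<close>) is a pseudoultrametric on a copy of \<open>Q\<close> taking
  every value in \<open>Q\<close>. In a combinatorial similarity \<open>f\<close> with an \<open>\<real>\<^sub>0\<close>-valued \<open>\<rho>\<close>, the
  triangle \<open>q\<^sub>0 < a < b\<close> has sides \<open>f a, f b, f b\<close>, and the ultrametric inequality forces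
  \<open>f a \<preceq> f b\<close>; so \<open>f\<close> is an injective monotone map \<open>Q \<rightarrow> \<real>\<^sub>0\<close>. Its first coordinate has fibres
  of at most two points, and a countable dense set of \<open>Q\<close> then consists of preimages of rational
  intervals and of the end points of the countably many jumps of \<open>Q\<close> across which the first
  coordinate increases.\<close>

section \<open>Order topology\<close>

lemma finite_if_no_chain3:
  fixes S :: "'a::linorder set"
  assumes "\<And>x y z. x \<in> S \<Longrightarrow> y \<in> S \<Longrightarrow> z \<in> S \<Longrightarrow> x < y \<Longrightarrow> y < z \<Longrightarrow> False"
  shows "finite S"
proof (rule ccontr)
  assume "infinite S"
  then obtain B where B: "finite B" "card B = 3" "B \<subseteq> S"
    using infinite_arbitrarily_large by blast
  define xs where "xs = sorted_list_of_set B"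
  have "length xs = 3" "sorted_wrt (<) xs" "set xs = B"
    using B by (simp_all add: xs_def)
  then obtain x y z where "xs = [x, y, z]" "x < y" "y < z"
    by (auto simp: numeral_3_eq_3 length_Suc_conv)
  with assms \<open>set xs = B\<close> \<open>B \<subseteq> S\<close> show False by auto
qed

definition strictly_between :: "'a::linorder set \<Rightarrow> 'a set \<Rightarrow> 'a set" where
  "strictly_between Lo Hi = {y. (\<forall>a\<in>Lo. a < y) \<and> (\<forall>b\<in>Hi. y < b)}"

lemma strictly_between_Un:
  "strictly_between (Lo1 \<union> Lo2) (Hi1 \<union> Hi2) = strictly_between Lo1 Hi1 \<inter> strictly_between Lo2 Hi2"
  unfolding strictly_between_def by blast

lemma strictly_between_convex:
  "y \<in> strictly_between Lo Hi \<Longrightarrow> w \<in> strictly_between Lo Hi \<Longrightarrow> y \<le> z \<Longrightarrow> z \<le> w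
    \<Longrightarrow> z \<in> strictly_between Lo Hi"
  unfolding strictly_between_def by (auto intro: less_le_trans le_less_trans)

lemma strictly_between_greatest:
  assumes "finite Hi" "t \<in> strictly_between Lo Hi"
    and "\<And>y. y \<in> strictly_between Lo Hi \<Longrightarrow> y \<le> t"
  obtains "\<And>y. y \<le> t" | b where "t < b" "{t<..<b} = {}"
proof (cases "Hi = {}")
  case True
  have "y \<le> t" for y
  proof (rule ccontr)
    assume "\<not> y \<le> t"
    then have "y \<in> strictly_between Lo Hi"
      using assms(2) True by (auto simp: strictly_between_def intro: less_trans)
    with assms(3) \<open>\<not> y \<le> t\<close> show False by blast
  qed
  then show thesis by (rule that(1))
next
  case False
  have "t < Min Hi" using assms(1,2) False by (simp add: strictly_between_def)
  moreover have "{t<..<Min Hi} = {}"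
  proof -
    have "z \<in> strictly_between Lo Hi" if "t < z" "z < Min Hi" for z
      using that assms(1,2) False by (auto simp: strictly_between_def intro: less_trans)
    with assms(3) show ?thesis by (meson greaterThanLessThan_iff equals0I leD)
  qed
  ultimately show thesis by (rule that(2))
qed

lemma strictly_between_least:
  assumes "finite Lo" "m \<in> strictly_between Lo Hi"
    and "\<And>y. y \<in> strictly_between Lo Hi \<Longrightarrow> m \<le> y"
  obtains "\<And>y. m \<le> y" | a where "a < m" "{a<..<m} = {}"
proof (cases "Lo = {}")
  case True
  have "m \<le> y" for y
  proof (rule ccontr)
    assume "\<not> m \<le> y"
    then have "y \<in> strictly_between Lo Hi"
      using assms(2) True by (auto simp: strictly_between_def intro: less_trans)
    with assms(3) \<open>\<not> m \<le> y\<close> show False by blast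
  qed
  then show thesis by (rule that(1))
next
  case False
  have "Max Lo < m" using assms(1,2) False by (simp add: strictly_between_def)
  moreover have "{Max Lo<..<m} = {}"
  proof -
    have "z \<in> strictly_between Lo Hi" if "Max Lo < z" "z < m" for z
      using that assms(1,2) False by (auto simp: strictly_between_def intro: less_trans)
    with assms(3) show ?thesis by (meson greaterThanLessThan_iff equals0I leD)
  qed
  ultimately show thesis by (rule that(2))
qed

lemma openin_order_topology_greaterThan: "openin order_topology_of {a<..}"
  unfolding order_topology_of_def by (rule topology_generated_by_Basis) (auto simp: greaterThan_def)

lemma openin_order_topology_lessThan: "openin order_topology_of {..<b}"
  unfolding order_topology_of_def by (rule topology_generated_by_Basis) (auto simp: lessThan_def)

lemma openin_order_topology_greaterThanLessThan: "openin order_topology_of {a<..<b}"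
  using openin_Int[OF openin_order_topology_greaterThan openin_order_topology_lessThan]
  by (simp add: greaterThanLessThan_eq)

lemma openin_order_topology_imp_strictly_between:
  assumes "openin order_topology_of U" "(x::'a::linorder) \<in> U"
  shows "\<exists>Lo Hi. finite Lo \<and> finite Hi \<and> x \<in> strictly_between Lo Hi \<and> strictly_between Lo Hi \<subseteq> U"
proof -
  have "generate_topology_on ({{q. q < a} | a. True} \<union> {{q. a < q} | a. True}) U"
    using assms(1) by (simp add: order_topology_of_def openin_topology_generated_by_iff)
  then show ?thesis using assms(2)
  proof (induction arbitrary: x)
    case Empty
    then show ?case by simp
  next
    case (Int A B)
    obtain Lo1 Hi1 where
      "finite Lo1" "finite Hi1" "x \<in> strictly_between Lo1 Hi1" "strictly_between Lo1 Hi1 \<subseteq> A"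
      using Int.IH(1) Int.prems by blast
    moreover obtain Lo2 Hi2 where
      "finite Lo2" "finite Hi2" "x \<in> strictly_between Lo2 Hi2" "strictly_between Lo2 Hi2 \<subseteq> B"
      using Int.IH(2) Int.prems by blast
    ultimately have "finite (Lo1 \<union> Lo2) \<and> finite (Hi1 \<union> Hi2) \<and>
      x \<in> strictly_between (Lo1 \<union> Lo2) (Hi1 \<union> Hi2) \<and>
      strictly_between (Lo1 \<union> Lo2) (Hi1 \<union> Hi2) \<subseteq> A \<inter> B"
      unfolding strictly_between_Un by auto
    then show ?case by (intro exI)
  next
    case (UN K)
    then obtain k where "k \<in> K" "x \<in> k" by blast
    with UN.IH obtain Lo Hi where
      "finite Lo" "finite Hi" "x \<in> strictly_between Lo Hi" "strictly_between Lo Hi \<subseteq> k"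
      by meson
    with \<open>k \<in> K\<close> show ?case by blast
  next
    case (Basis s)
    then obtain a where "s = {q. q < a} \<or> s = {q. a < q}" by blast
    then show ?case
    proof
      assume "s = {q. q < a}"
      with Basis.prems show ?thesis
        by (intro exI[of _ "{}"] exI[of _ "{a}"]) (auto simp: strictly_between_def)
    next
      assume "s = {q. a < q}"
      with Basis.prems show ?thesis
        by (intro exI[of _ "{a}"] exI[of _ "{}"]) (auto simp: strictly_between_def)
    qed
  qed
qed

text \<open>Intersecting with the topspace makes the criterion valid even when \<open>Q\<close> has a single point
  (then all rays are empty and so is the topspace).\<close>

lemma separable_order_topologyI:
  fixes D :: "'a::linorder set"
  assumes "countable D"
    and "\<And>Lo Hi x. finite Lo \<Longrightarrow> finite Hi \<Longrightarrow> x \<in> strictly_between Lo Hi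
           \<Longrightarrow> D \<inter> strictly_between Lo Hi \<noteq> {}"
  shows "separable_topology (order_topology_of :: 'a topology)"
  unfolding separable_topology_def
proof (intro exI[of _ "D \<inter> topspace order_topology_of"] conjI allI impI)
  show "countable (D \<inter> topspace order_topology_of)" using assms(1) by simp
  fix U :: "'a set" assume U: "openin order_topology_of U \<and> U \<noteq> {}"
  then obtain x where "x \<in> U" by blast
  with U obtain Lo Hi where "finite Lo" "finite Hi" "x \<in> strictly_between Lo Hi"
      "strictly_between Lo Hi \<subseteq> U"
    using openin_order_topology_imp_strictly_between by metis
  moreover have "U \<subseteq> topspace order_topology_of" using U by (simp add: openin_subset)
  ultimately show "D \<inter> topspace order_topology_of \<inter> U \<noteq> {}"
    using assms(2)[of Lo Hi x] by blast
qed simp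

lemma separable_order_topologyD:
  assumes "separable_topology (order_topology_of :: 'a::linorder topology)"
  obtains e :: "nat \<Rightarrow> 'a::linorder" where "\<And>a b. {a<..<b} \<noteq> {} \<Longrightarrow> \<exists>n. a < e n \<and> e n < b"
proof -
  obtain D where "countable D"
    and D: "\<forall>U. openin (order_topology_of :: 'a topology) U \<and> U \<noteq> {} \<longrightarrow> D \<inter> U \<noteq> {}"
    using assms unfolding separable_topology_def by auto
  have D_range: "D \<subseteq> range (from_nat_into D)"
    using \<open>countable D\<close> by (rule subset_range_from_nat_into)
  show thesis
  proof (rule that)
    fix a b :: 'a assume "{a<..<b} \<noteq> {}"
    then have "D \<inter> {a<..<b} \<noteq> {}"
      using D openin_order_topology_greaterThanLessThan[of a b] by simp
    then obtain d where "d \<in> D" "a < d" "d < b" by auto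
    moreover obtain n where "d = from_nat_into D n" using D_range \<open>d \<in> D\<close> by blast
    ultimately show "\<exists>n. a < from_nat_into D n \<and> from_nat_into D n < b" by blast
  qed
qed

section \<open>Orders embedded in \<open>\<real>\<^sub>0\<close> are separable\<close>

text \<open>For monotone \<open>\<phi>\<close> this says that every fibre of \<open>\<phi>\<close> has at most two points.\<close>

definition two_step_strict_mono :: "('a::linorder \<Rightarrow> 'b::order) \<Rightarrow> bool" where
  "two_step_strict_mono \<phi> \<longleftrightarrow> (\<forall>x y z. x < y \<longrightarrow> y < z \<longrightarrow> \<phi> x < \<phi> z)"

lemma two_step_strict_monoD: "two_step_strict_mono \<phi> \<Longrightarrow> x < y \<Longrightarrow> y < z \<Longrightarrow> \<phi> x < \<phi> z"
  unfolding two_step_strict_mono_def by blast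

lemma two_step_strict_mono_finite_vimage:
  assumes "two_step_strict_mono \<phi>"
  shows "finite (\<phi> -` {c})"
  by (rule finite_if_no_chain3) (use two_step_strict_monoD[OF assms] in fastforce)

lemma gap_least_above:
  fixes a :: "'a::linorder"
  assumes "a < b" "{a<..<b} = {}" "a < c"
  shows "b \<le> c"
  using assms by (metis greaterThanLessThan_iff empty_iff not_le)

lemma countable_increasing_gaps:
  fixes \<phi> :: "'a::linorder \<Rightarrow> real"
  assumes "mono \<phi>"
  shows "countable {(a, b). a < b \<and> \<phi> a < \<phi> b \<and> {a<..<b} = {}}" (is "countable ?J")
proof -
  define I where "I p = {\<phi> (fst p)<..<\<phi> (snd p)}" for p
  have I_disjoint: "I p \<inter> I p' = {}" if "p \<in> ?J" "p' \<in> ?J" "fst p < fst p'" for p p'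
  proof -
    have "snd p \<le> fst p'" using that by (auto intro: gap_least_above)
    then have "\<phi> (snd p) \<le> \<phi> (fst p')" by (rule monoD[OF assms])
    then show ?thesis by (auto simp: I_def)
  qed
  have same_gap: "p = p'" if "p \<in> ?J" "p' \<in> ?J" "fst p = fst p'" for p p'
    using that gap_least_above[of "fst p" "snd p" "snd p'"] gap_least_above[of "fst p" "snd p'" "snd p"]
    by (auto simp: prod_eq_iff)
  have pairwise_disjoint: "disjoint_family_on I ?J"
    unfolding disjoint_family_on_def
  proof (intro ballI impI)
    fix p p' assume pp: "p \<in> ?J" "p' \<in> ?J" "p \<noteq> p'"
    show "I p \<inter> I p' = {}"
    proof (cases "fst p" "fst p'" rule: linorder_cases)
      case less
      then show ?thesis using I_disjoint[OF pp(1,2)] by blast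
    next
      case equal
      then show ?thesis using same_gap[OF pp(1,2)] pp(3) by blast
    next
      case greater
      then show ?thesis using I_disjoint[OF pp(2,1)] by blast
    qed
  qed
  have "inj_on I ?J"
  proof (rule inj_onI, rule ccontr)
    fix p p' assume p: "p \<in> ?J" "p' \<in> ?J" "I p = I p'" "p \<noteq> p'"
    then have "I p \<inter> I p' = {}" using pairwise_disjoint unfolding disjoint_family_on_def by blast
    moreover have "I p \<noteq> {}" using p(1) by (auto simp: I_def)
    ultimately show False using p(3) by simp
  qed
  moreover have "countable (I ` ?J)"
    by (rule countable_disjoint_open_subsets[OF _ disjoint_family_on_disjoint_image[OF pairwise_disjoint]])
      (auto simp: I_def)
  ultimately show ?thesis by (rule countable_image_inj_on[rotated])
qed

lemma exists_increasing_gap: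
  fixes \<phi> :: "'a::linorder \<Rightarrow> real"
  assumes "mono \<phi>" and "two_step_strict_mono \<phi>"
    and "\<phi> u < \<phi> v" and no_value_between: "\<And>z. \<not> (\<phi> u < \<phi> z \<and> \<phi> z < \<phi> v)"
  obtains a b where "u \<le> a" "b \<le> v" "a < b" "\<phi> a < \<phi> b" "{a<..<b} = {}"
proof -
  define A where "A = {z. u \<le> z \<and> z < v \<and> \<phi> z = \<phi> u}"
  define B where "B = {z. u < z \<and> z \<le> v \<and> \<phi> z = \<phi> v}"
  have "u < v" using \<open>\<phi> u < \<phi> v\<close> \<open>mono \<phi>\<close> by (auto elim: mono_strict_invE)
  have "finite (\<phi> -` {c})" for c using \<open>two_step_strict_mono \<phi>\<close> by (rule two_step_strict_mono_finite_vimage)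
  moreover have "A \<subseteq> \<phi> -` {\<phi> u}" "B \<subseteq> \<phi> -` {\<phi> v}" by (auto simp: A_def B_def)
  ultimately have "finite A" "finite B" by (auto intro: finite_subset)
  moreover have "u \<in> A" "v \<in> B" using \<open>u < v\<close> by (auto simp: A_def B_def)
  ultimately have a: "Max A \<in> A" "\<And>z. z \<in> A \<Longrightarrow> z \<le> Max A"
    and b: "Min B \<in> B" "\<And>z. z \<in> B \<Longrightarrow> Min B \<le> z"
    by (auto intro: Max_in Min_in)
  have "\<phi> (Max A) < \<phi> (Min B)" using a(1) b(1) \<open>\<phi> u < \<phi> v\<close> by (simp add: A_def B_def)
  moreover from this have "Max A < Min B" using \<open>mono \<phi>\<close> by (auto elim: mono_strict_invE)
  moreover have "{Max A<..<Min B} = {}"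
  proof (rule equals0I)
    fix z assume z: "z \<in> {Max A<..<Min B}"
    then have "u < z" "z < v" using a(1) b(1) by (auto simp: A_def B_def)
    moreover from this have "\<phi> u \<le> \<phi> z" "\<phi> z \<le> \<phi> v" using monoD[OF \<open>mono \<phi>\<close>] by simp_all
    with no_value_between[of z] have "\<phi> z = \<phi> u \<or> \<phi> z = \<phi> v" by linarith
    ultimately have "z \<in> A \<or> z \<in> B" by (auto simp: A_def B_def)
    then show False using a(2) b(2) z by fastforce
  qed
  moreover have "u \<le> Max A" "Min B \<le> v" using a(1) b(1) by (auto simp: A_def B_def)
  ultimately show thesis using that by blast
qed

lemma countable_dense_for_mono:
  fixes \<phi> :: "'a::linorder \<Rightarrow> real"
  assumes "mono \<phi>" and "two_step_strict_mono \<phi>"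
  obtains D where "countable D"
    and "\<And>a b. a < b \<Longrightarrow> \<phi> a < \<phi> b \<Longrightarrow> {a<..<b} = {} \<Longrightarrow> a \<in> D \<and> b \<in> D"
    and "\<And>u v. \<phi> u < \<phi> v \<Longrightarrow> \<exists>d\<in>D. u \<le> d \<and> d \<le> v"
proof -
  let ?J = "{(a, b). a < b \<and> \<phi> a < \<phi> b \<and> {a<..<b} = {}}"
  \<comment> \<open>\<open>pick r s\<close> is arbitrary when \<open>\<phi>\<close> takes no value in \<open>(r, s)\<close>, which only adds harmless points to \<open>D\<close>.\<close>
  define pick where "pick r s = (SOME q. r < \<phi> q \<and> \<phi> q < s)" for r s
  define D where "D = case_prod pick ` (\<rat> \<times> \<rat>) \<union> fst ` ?J \<union> snd ` ?J"
  have "countable (\<rat> \<times> (\<rat> :: real set))" by (simp add: countable_rat)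
  then have "countable (case_prod pick ` (\<rat> \<times> \<rat>))" by (rule countable_image)
  then have "countable D"
    using countable_increasing_gaps[OF assms(1)] by (simp add: D_def)
  moreover have gaps_in_D: "a \<in> D \<and> b \<in> D" if "a < b" "\<phi> a < \<phi> b" "{a<..<b} = {}" for a b
  proof -
    have "(a, b) \<in> ?J" using that by simp
    then have "a \<in> fst ` ?J" "b \<in> snd ` ?J" by (force intro: image_eqI)+
    then show ?thesis unfolding D_def by blast
  qed
  moreover have "\<exists>d\<in>D. u \<le> d \<and> d \<le> v" if "\<phi> u < \<phi> v" for u v
  proof (cases "\<exists>z. \<phi> u < \<phi> z \<and> \<phi> z < \<phi> v")
    case True
    then obtain z where z: "\<phi> u < \<phi> z" "\<phi> z < \<phi> v" by blast
    obtain r where r: "r \<in> \<rat>" "\<phi> u < r" "r < \<phi> z" using Rats_dense_in_real[OF z(1)] by blast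
    obtain s where s: "s \<in> \<rat>" "\<phi> z < s" "s < \<phi> v" using Rats_dense_in_real[OF z(2)] by blast
    have "r < \<phi> (pick r s) \<and> \<phi> (pick r s) < s"
      unfolding pick_def by (rule someI[of _ z]) (use r s in simp)
    then have "\<phi> u < \<phi> (pick r s)" "\<phi> (pick r s) < \<phi> v" using r s by linarith+
    then have "u < pick r s" "pick r s < v" using \<open>mono \<phi>\<close> by (auto elim: mono_strict_invE)
    moreover have "pick r s \<in> D"
      unfolding D_def using r(1) s(1) by (intro UnI1 image_eqI[of _ _ "(r, s)"]) simp_all
    ultimately show ?thesis by (intro bexI[of _ "pick r s"] conjI less_imp_le)
  next
    case False
    then have "\<not> (\<phi> u < \<phi> z \<and> \<phi> z < \<phi> v)" for z by blast
    with assms \<open>\<phi> u < \<phi> v\<close> obtain a b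
      where "u \<le> a" "b \<le> v" "a < b" "\<phi> a < \<phi> b" "{a<..<b} = {}"
      by (rule exists_increasing_gap)
    moreover have "a \<le> v" using \<open>a < b\<close> \<open>b \<le> v\<close> by (meson less_le_trans less_imp_le)
    ultimately show ?thesis using gaps_in_D[of a b] by blast
  qed
  ultimately show thesis by (rule that)
qed

lemma strictly_between_meets_dense:
  fixes \<phi> :: "'a::linorder \<Rightarrow> real"
  assumes "two_step_strict_mono \<phi>"
    and dense: "\<And>u v. \<phi> u < \<phi> v \<Longrightarrow> \<exists>d\<in>D. u \<le> d \<and> d \<le> v"
    and gaps: "\<And>a b. a < b \<Longrightarrow> \<phi> a < \<phi> b \<Longrightarrow> {a<..<b} = {} \<Longrightarrow> a \<in> D \<and> b \<in> D"
    and least: "\<And>m. (\<And>y. m \<le> y) \<Longrightarrow> m \<in> D"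
    and greatest: "\<And>t. (\<And>y. y \<le> t) \<Longrightarrow> t \<in> D"
    and "finite Lo" "finite Hi" "x \<in> strictly_between Lo Hi"
  shows "D \<inter> strictly_between Lo Hi \<noteq> {}"
proof (cases "\<exists>y\<in>strictly_between Lo Hi. \<exists>w\<in>strictly_between Lo Hi. \<phi> y < \<phi> w")
  case True
  then obtain y w where yw: "y \<in> strictly_between Lo Hi" "w \<in> strictly_between Lo Hi" "\<phi> y < \<phi> w"
    by blast
  then obtain d where "d \<in> D" "y \<le> d" "d \<le> w" using dense[OF yw(3)] by blast
  then show ?thesis using strictly_between_convex[OF yw(1,2)] by blast
next
  \<comment> \<open>\<open>\<phi>\<close> is constant on the interval, so the interval is finite, and one of its end points is an
    end point of the order or an end of a gap across which \<open>\<phi>\<close> increases.\<close>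
  case False
  let ?I = "strictly_between Lo Hi"
  have const: "\<phi> y = \<phi> x" if "y \<in> ?I" for y
  proof -
    have "\<not> \<phi> y < \<phi> x" "\<not> \<phi> x < \<phi> y" using False that \<open>x \<in> ?I\<close> by blast+
    then show ?thesis by linarith
  qed
  have "finite (\<phi> -` {\<phi> x})" using \<open>two_step_strict_mono \<phi>\<close> by (rule two_step_strict_mono_finite_vimage)
  moreover have "?I \<subseteq> \<phi> -` {\<phi> x}" using const by blast
  ultimately have "finite ?I" by (rule finite_subset[rotated])
  with \<open>x \<in> ?I\<close> have m: "Min ?I \<in> ?I" "\<And>y. y \<in> ?I \<Longrightarrow> Min ?I \<le> y"
    and t: "Max ?I \<in> ?I" "\<And>y. y \<in> ?I \<Longrightarrow> y \<le> Max ?I"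
    by (auto intro: Min_in Max_in)
  show ?thesis
  proof (rule strictly_between_least[OF \<open>finite Lo\<close> m])
    assume "\<And>y. Min ?I \<le> y"
    then show ?thesis using least m(1) by blast
  next
    fix a assume a: "a < Min ?I" "{a<..<Min ?I} = {}"
    show ?thesis
    proof (rule strictly_between_greatest[OF \<open>finite Hi\<close> t])
      assume "\<And>y. y \<le> Max ?I"
      then show ?thesis using greatest t(1) by blast
    next
      fix b assume b: "Max ?I < b" "{Max ?I<..<b} = {}"
      have "Min ?I < b" using m(2)[OF t(1)] b(1) by (rule le_less_trans)
      with \<open>two_step_strict_mono \<phi>\<close> a(1) have "\<phi> a < \<phi> b" by (rule two_step_strict_monoD)
      moreover have "\<phi> (Min ?I) = \<phi> (Max ?I)" using const m(1) t(1) by simp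
      ultimately consider "\<phi> a < \<phi> (Min ?I)" | "\<phi> (Max ?I) < \<phi> b" by linarith
      then show ?thesis
      proof cases
        case 1
        then show ?thesis using gaps[OF a(1) 1 a(2)] m(1) by blast
      next
        case 2
        then show ?thesis using gaps[OF b(1) 2 b(2)] t(1) by blast
      qed
    qed
  qed
qed

lemma le_R0_refl: "le_R0 p p"
  by (simp add: le_R0_def)

lemma le_R0_antisym: "le_R0 p q \<Longrightarrow> le_R0 q p \<Longrightarrow> p = q"
  by (auto simp: le_R0_def prod_eq_iff)

lemma le_R0_imp_fst_le: "le_R0 p q \<Longrightarrow> fst p \<le> fst q"
  by (auto simp: le_R0_def)

lemma two_step_strict_mono_fst_if_mono_inj_R0:
  fixes f :: "'a::linorder \<Rightarrow> real \<times> bool"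
  assumes "inj f" and mono_f: "\<And>a b. a \<le> b \<Longrightarrow> le_R0 (f a) (f b)"
  shows "two_step_strict_mono (\<lambda>x. fst (f x))"
  unfolding two_step_strict_mono_def
proof (intro allI impI, rule ccontr)
  fix x y z :: 'a assume "x < y" "y < z" "\<not> fst (f x) < fst (f z)"
  moreover have "fst (f x) \<le> fst (f y)" "fst (f y) \<le> fst (f z)"
    using mono_f[THEN le_R0_imp_fst_le] \<open>x < y\<close> \<open>y < z\<close> by (simp_all add: less_imp_le)
  ultimately have "fst (f x) = fst (f y)" "fst (f y) = fst (f z)" by linarith+
  moreover have "f x \<noteq> f y" "f y \<noteq> f z" "f x \<noteq> f z"
    using \<open>x < y\<close> \<open>y < z\<close> inj_eq[OF \<open>inj f\<close>] by auto
  ultimately have "snd (f x) \<noteq> snd (f y)" "snd (f y) \<noteq> snd (f z)" "snd (f x) \<noteq> snd (f z)"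
    by (auto simp: prod_eq_iff)
  then show False by (cases "snd (f x)") auto
qed

lemma separable_order_topology_if_mono_inj_R0:
  fixes f :: "'a::linorder \<Rightarrow> real \<times> bool"
  assumes "inj f" and mono_f: "\<And>a b. a \<le> b \<Longrightarrow> le_R0 (f a) (f b)"
  shows "separable_topology (order_topology_of :: 'a topology)"
proof -
  define \<phi> where "\<phi> x = fst (f x)" for x
  have "mono \<phi>" unfolding \<phi>_def by (rule monoI) (rule le_R0_imp_fst_le[OF mono_f])
  have "two_step_strict_mono \<phi>"
    unfolding \<phi>_def using assms by (rule two_step_strict_mono_fst_if_mono_inj_R0)
  obtain D where "countable D"
    and gaps: "\<And>a b. a < b \<Longrightarrow> \<phi> a < \<phi> b \<Longrightarrow> {a<..<b} = {} \<Longrightarrow> a \<in> D \<and> b \<in> D"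
    and dense: "\<And>u v. \<phi> u < \<phi> v \<Longrightarrow> \<exists>d\<in>D. u \<le> d \<and> d \<le> v"
    using countable_dense_for_mono[OF \<open>mono \<phi>\<close> \<open>two_step_strict_mono \<phi>\<close>] by blast
  define E :: "'a set" where "E = {m. \<forall>y. m \<le> y} \<union> {t. \<forall>y. y \<le> t}"
  have "finite E" unfolding E_def
    by (intro finite_UnI finite_if_no_chain3) (use leD in blast)+
  show ?thesis
  proof (rule separable_order_topologyI[of "D \<union> E"])
    show "countable (D \<union> E)" using \<open>countable D\<close> \<open>finite E\<close> by (simp add: countable_finite)
    fix Lo Hi :: "'a set" and x assume "finite Lo" "finite Hi" "x \<in> strictly_between Lo Hi"
    then show "(D \<union> E) \<inter> strictly_between Lo Hi \<noteq> {}"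
    proof (rule strictly_between_meets_dense[OF \<open>two_step_strict_mono \<phi>\<close>, rotated 4])
      show "\<exists>d\<in>D \<union> E. u \<le> d \<and> d \<le> v" if "\<phi> u < \<phi> v" for u v
        using dense[OF that] by blast
      show "a \<in> D \<union> E \<and> b \<in> D \<union> E" if "a < b" "\<phi> a < \<phi> b" "{a<..<b} = {}" for a b
        using gaps[OF that] by blast
      show "m \<in> D \<union> E" if "\<And>y. m \<le> y" for m using that by (auto simp: E_def)
      show "t \<in> D \<union> E" if "\<And>y. y \<le> t" for t using that by (auto simp: E_def)
    qed
  qed
qed

section \<open>Separable orders embed into \<open>\<real>\<^sub>0\<close>\<close>

definition weight :: "(nat \<Rightarrow> 'a::linorder) \<Rightarrow> 'a \<Rightarrow> real" where
  "weight e q = (\<Sum>n. if e n < q then (1/2) ^ n else 0)"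

lemma summable_weight: "summable (\<lambda>n. if e n < q then (1/2::real) ^ n else 0)"
  by (rule summable_comparison_test'[where N = 0, OF summable_geometric[of "1/2::real"]]) auto

lemma weight_nonneg: "0 \<le> weight e q"
  unfolding weight_def by (rule suminf_nonneg[OF summable_weight]) simp

lemma weight_eq_0: "(\<And>n. \<not> e n < q) \<Longrightarrow> weight e q = 0"
  by (simp add: weight_def)

lemma weight_less:
  assumes "q \<le> e n" "e n < q'"
  shows "weight e q < weight e q'"
proof -
  have "weight e q' - weight e q
      = (\<Sum>m. (if e m < q' then (1/2) ^ m else 0) - (if e m < q then (1/2) ^ m else 0))"
    unfolding weight_def by (rule suminf_diff[OF summable_weight summable_weight])
  also have "\<dots> > 0"
  proof (rule suminf_pos2)
    show "summable (\<lambda>m. (if e m < q' then (1/2::real) ^ m else 0) - (if e m < q then (1/2) ^ m else 0))"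
      by (rule summable_diff[OF summable_weight summable_weight])
    have "q < q'" using assms by (rule le_less_trans)
    then show "0 \<le> (if e m < q' then (1/2::real) ^ m else 0) - (if e m < q then (1/2) ^ m else 0)" for m
      by auto
    show "0 < (if e n < q' then (1/2::real) ^ n else 0) - (if e n < q then (1/2) ^ n else 0)"
      using assms by simp
  qed
  finally show ?thesis by simp
qed

lemma weight_eq:
  assumes "q \<le> q'" "\<And>n. \<not> (q \<le> e n \<and> e n < q')"
  shows "weight e q = weight e q'"
proof -
  have "e n < q \<longleftrightarrow> e n < q'" for n
    using assms(1) assms(2)[of n] by (auto simp: not_le intro: less_le_trans)
  then show ?thesis by (simp add: weight_def)
qed

text \<open>The second coordinate tells whether some \<open>[p, q)\<close> misses \<open>e\<close>; it separates \<open>q\<close> from an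
  immediate predecessor of the same weight.\<close>

definition R0_code :: "(nat \<Rightarrow> 'a::linorder) \<Rightarrow> 'a \<Rightarrow> real \<times> bool" where
  "R0_code e q = (weight e q, \<exists>p<q. \<forall>n. \<not> (p \<le> e n \<and> e n < q))"

lemma R0_code_strict:
  assumes dense: "\<And>a b. {a<..<b} \<noteq> {} \<Longrightarrow> \<exists>n. a < e n \<and> e n < b" and "q < q'"
  shows "le_R0 (R0_code e q) (R0_code e q') \<and> R0_code e q \<noteq> R0_code e q'"
proof (cases "\<exists>n. q \<le> e n \<and> e n < q'")
  case True
  then obtain n where "q \<le> e n" "e n < q'" by blast
  then have "weight e q < weight e q'" by (rule weight_less)
  then show ?thesis by (auto simp: R0_code_def le_R0_def)
next
  case False
  then have "weight e q = weight e q'" using \<open>q < q'\<close> by (intro weight_eq) auto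
  moreover have "\<exists>p<q'. \<forall>n. \<not> (p \<le> e n \<and> e n < q')" using False \<open>q < q'\<close> by blast
  moreover have "\<not> (\<exists>p<q. \<forall>n. \<not> (p \<le> e n \<and> e n < q))"
  proof
    assume "\<exists>p<q. \<forall>n. \<not> (p \<le> e n \<and> e n < q)"
    then obtain p where p: "p < q" "\<And>n. \<not> (p \<le> e n \<and> e n < q)" by blast
    have "{p<..<q'} \<noteq> {}" using p(1) \<open>q < q'\<close> by auto
    then obtain n where "p < e n" "e n < q'" using dense by blast
    then show False using p(2)[of n] False by (auto simp: not_less less_imp_le)
  qed
  ultimately show ?thesis by (auto simp: R0_code_def le_R0_def)
qed

lemma order_embedding_if_strict_le_R0:
  fixes f :: "'a::linorder \<Rightarrow> real \<times> bool"
  assumes "\<And>a b. a < b \<Longrightarrow> le_R0 (f a) (f b) \<and> f a \<noteq> f b"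
  shows "a \<le> b \<longleftrightarrow> le_R0 (f a) (f b)"
proof
  assume "a \<le> b"
  then show "le_R0 (f a) (f b)" using assms[of a b] le_R0_refl by (cases "a = b") auto
next
  assume ab: "le_R0 (f a) (f b)"
  show "a \<le> b"
  proof (rule ccontr)
    assume "\<not> a \<le> b"
    then have "le_R0 (f b) (f a)" "f b \<noteq> f a" using assms[of b a] by simp_all
    with ab show False using le_R0_antisym by blast
  qed
qed

lemma inj_if_order_embedding_R0:
  fixes f :: "'a::order \<Rightarrow> real \<times> bool"
  assumes "\<And>a b. a \<le> b \<longleftrightarrow> le_R0 (f a) (f b)"
  shows "inj f"
proof (rule injI)
  fix a b assume "f a = f b"
  then show "a = b" using assms[of a b] assms[of b a] le_R0_refl by (simp add: order_antisym)
qed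

lemma separable_order_topology_imp_R0_embedding:
  fixes q0 :: "'a::linorder"
  assumes "\<And>q. q0 \<le> q" "separable_topology (order_topology_of :: 'a topology)"
  obtains f :: "'a \<Rightarrow> real \<times> bool"
  where "\<And>a b. a \<le> b \<longleftrightarrow> le_R0 (f a) (f b)" "f q0 = (0, False)" "\<And>q. f q \<in> R0"
proof -
  obtain e :: "nat \<Rightarrow> 'a" where dense: "\<And>a b. {a<..<b} \<noteq> {} \<Longrightarrow> \<exists>n. a < e n \<and> e n < b"
    using separable_order_topologyD[OF assms(2)] by blast
  have "a \<le> b \<longleftrightarrow> le_R0 (R0_code e a) (R0_code e b)" for a b
    using R0_code_strict[OF dense] by (rule order_embedding_if_strict_le_R0)
  moreover have "R0_code e q0 = (0, False)"
    using assms(1) weight_eq_0[of e q0] by (auto simp: R0_code_def not_less)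
  moreover have "R0_code e q \<in> R0" for q by (simp add: R0_code_def R0_def weight_nonneg)
  ultimately show thesis by (rule that)
qed

section \<open>Pseudoultrametrics\<close>

definition ultra_triangle :: "('p \<Rightarrow> 'p \<Rightarrow> bool) \<Rightarrow> ('x \<Rightarrow> 'x \<Rightarrow> 'p) \<Rightarrow> 'x \<Rightarrow> 'x \<Rightarrow> 'x \<Rightarrow> bool" where
  "ultra_triangle le d x1 x2 x3 \<longleftrightarrow>
     (le (d x1 x3) (d x1 x2) \<and> d x1 x2 = d x2 x3) \<or>
     (le (d x1 x2) (d x1 x3) \<and> d x1 x3 = d x3 x2) \<or>
     (le (d x2 x3) (d x2 x1) \<and> d x2 x1 = d x1 x3) \<or>
     (le (d x2 x1) (d x2 x3) \<and> d x2 x3 = d x3 x1) \<or>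
     (le (d x3 x2) (d x3 x1) \<and> d x3 x1 = d x1 x2) \<or>
     (le (d x3 x1) (d x3 x2) \<and> d x3 x2 = d x2 x1)"

lemma pseudoultrametric_iff_ultra_triangle:
  "pseudoultrametric le P X d \<longleftrightarrow>
     X \<noteq> {} \<and> (\<forall>x\<in>X. \<forall>y\<in>X. d x y \<in> P) \<and> (\<forall>x\<in>X. \<forall>y\<in>X. d x y = d y x) \<and>
     (\<forall>x\<in>X. \<forall>p\<in>P. le (d x x) p) \<and> (\<forall>x1\<in>X. \<forall>x2\<in>X. \<forall>x3\<in>X. ultra_triangle le d x1 x2 x3)"
  unfolding pseudoultrametric_def ultra_triangle_def by (rule refl)

lemma pseudoultrametric_comp_mono:
  assumes "pseudoultrametric le P X d"
    and "\<And>a. a \<in> P \<Longrightarrow> f a \<in> P'"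
    and "\<And>a b. a \<in> P \<Longrightarrow> b \<in> P \<Longrightarrow> le a b \<Longrightarrow> le' (f a) (f b)"
    and "\<And>x p. x \<in> X \<Longrightarrow> p \<in> P' \<Longrightarrow> le' (f (d x x)) p"
  shows "pseudoultrametric le' P' X (\<lambda>x y. f (d x y))"
proof -
  have dP: "d x y \<in> P" if "x \<in> X" "y \<in> X" for x y
    using assms(1) that by (simp add: pseudoultrametric_iff_ultra_triangle)
  have "ultra_triangle le' (\<lambda>x y. f (d x y)) x1 x2 x3" if "x1 \<in> X" "x2 \<in> X" "x3 \<in> X" for x1 x2 x3
  proof -
    have "ultra_triangle le d x1 x2 x3"
      using assms(1) that by (simp add: pseudoultrametric_iff_ultra_triangle)
    then show ?thesis
      unfolding ultra_triangle_def using assms(3) dP that by (elim disjE) auto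
  qed
  with assms(1,2,4) dP show ?thesis by (simp add: pseudoultrametric_iff_ultra_triangle)
qed

lemma pseudoultrametric_isosceles_le:
  assumes "pseudoultrametric le P Y \<rho>" "x \<in> Y" "y \<in> Y" "z \<in> Y"
    and "\<rho> x z = \<rho> y z" "\<rho> x y \<noteq> \<rho> x z"
  shows "le (\<rho> x y) (\<rho> x z)"
proof -
  have "ultra_triangle le \<rho> x y z" "\<rho> y x = \<rho> x y" "\<rho> z x = \<rho> x z" "\<rho> z y = \<rho> y z"
    using assms(1-4) by (simp_all add: pseudoultrametric_iff_ultra_triangle)
  then show ?thesis using assms(5,6) unfolding ultra_triangle_def by auto
qed

lemma weak_similar_comp:
  fixes d :: "'x \<Rightarrow> 'x \<Rightarrow> 'q::order"
  assumes "\<And>a b. a \<le> b \<longleftrightarrow> le_R0 (f a) (f b)"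
  shows "weak_similar X d X (\<lambda>x y. f (d x y))"
proof -
  have "inj f" using assms by (rule inj_if_order_embedding_R0)
  moreover have "(\<lambda>(x, y). f (d x y)) ` (X \<times> X) = f ` (\<lambda>(x, y). d x y) ` (X \<times> X)"
    by (auto simp: image_image case_prod_unfold)
  ultimately have "bij_betw f ((\<lambda>(x, y). d x y) ` (X \<times> X)) ((\<lambda>(x, y). f (d x y)) ` (X \<times> X))"
    by (simp add: bij_betw_def inj_on_subset[OF \<open>inj f\<close>])
  then show ?thesis unfolding weak_similar_def
    by (intro exI[of _ id] exI[of _ f]) (simp add: assms)
qed

lemma comb_similar_if_weak_similar: "weak_similar X d Y \<rho> \<Longrightarrow> comb_similar X d Y \<rho>"
  unfolding weak_similar_def comb_similar_def by blast

lemma cond_comb_if_cond_weak: "cond_weak TYPE('x) TYPE('q::linorder) \<Longrightarrow> cond_comb TYPE('x) TYPE('q)"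
  unfolding cond_weak_def cond_comb_def using comb_similar_if_weak_similar by blast

lemma cond_weak_if_separable:
  fixes q0 :: "'q::linorder"
  assumes "\<And>q. q0 \<le> q" "separable_topology (order_topology_of :: 'q topology)"
  shows "cond_weak TYPE('x) TYPE('q)"
proof -
  obtain f :: "'q \<Rightarrow> real \<times> bool" where emb: "\<And>a b. a \<le> b \<longleftrightarrow> le_R0 (f a) (f b)"
    and "f q0 = (0, False)" and "\<And>q. f q \<in> R0"
    using separable_order_topology_imp_R0_embedding[OF assms] by blast
  show ?thesis unfolding cond_weak_def
  proof (intro allI impI)
    fix X :: "'x set" and d :: "'x \<Rightarrow> 'x \<Rightarrow> 'q"
    assume pu: "pseudoultrametric (\<le>) UNIV X d"
    have "d x x = q0" if "x \<in> X" for x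
      using pu that assms(1) by (simp add: pseudoultrametric_iff_ultra_triangle order_antisym)
    then have "pseudoultrametric le_R0 R0 X (\<lambda>x y. f (d x y))"
      using \<open>f q0 = (0, False)\<close> \<open>\<And>q. f q \<in> R0\<close> emb
      by (intro pseudoultrametric_comp_mono[OF pu]) (auto simp: R0_def le_R0_def)
    then show "\<exists>(Y::'x set) \<rho>. pseudoultrametric le_R0 R0 Y \<rho> \<and> weak_similar X d Y \<rho>"
      using weak_similar_comp[OF emb] by blast
  qed
qed

definition max_ultrametric :: "'a \<Rightarrow> 'a::linorder \<Rightarrow> 'a \<Rightarrow> 'a" where
  "max_ultrametric q0 a b = (if a = b then q0 else max a b)"

lemma pseudoultrametric_max_ultrametric:
  assumes "\<And>q. q0 \<le> q" "A \<noteq> {}"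
  shows "pseudoultrametric (\<le>) UNIV A (max_ultrametric q0)"
proof -
  have "ultra_triangle (\<le>) (max_ultrametric q0) x1 x2 x3" for x1 x2 x3
    unfolding ultra_triangle_def max_ultrametric_def using assms(1)
    by (cases "x1 = x2"; cases "x2 = x3"; cases "x1 = x3"; auto simp: max_def)
  then show ?thesis
    using assms by (simp add: pseudoultrametric_iff_ultra_triangle max_ultrametric_def max.commute)
qed

lemma pseudoultrametric_inj_image:
  assumes "pseudoultrametric le P A d" "inj_on g A"
  shows "pseudoultrametric le P (g ` A) (\<lambda>x y. d (inv_into A g x) (inv_into A g y))"
proof -
  have "ultra_triangle le (\<lambda>x y. d (inv_into A g x) (inv_into A g y)) (g a1) (g a2) (g a3)
      \<longleftrightarrow> ultra_triangle le d a1 a2 a3" if "a1 \<in> A" "a2 \<in> A" "a3 \<in> A" for a1 a2 a3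
    using that by (simp add: ultra_triangle_def inv_into_f_f[OF assms(2)])
  with assms(1) show ?thesis
    by (simp add: pseudoultrametric_iff_ultra_triangle inv_into_f_f[OF assms(2)])
qed

lemma separable_if_cond_comb:
  fixes q0 :: "'q::linorder" and g :: "'q \<Rightarrow> 'x"
  assumes least: "\<And>q. q0 \<le> q" and "inj g" and "cond_comb TYPE('x) TYPE('q)"
  shows "separable_topology (order_topology_of :: 'q topology)"
proof -
  define d where "d x y = max_ultrametric q0 (inv g x) (inv g y)" for x y
  have "pseudoultrametric (\<le>) UNIV (range g) d"
    unfolding d_def using pseudoultrametric_max_ultrametric[OF least UNIV_not_empty] \<open>inj g\<close>
    by (rule pseudoultrametric_inj_image)
  then obtain Y :: "'x set" and \<rho> h F where \<rho>: "pseudoultrametric le_R0 R0 Y \<rho>"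
    and h: "bij_betw h (range g) Y"
    and F: "bij_betw F ((\<lambda>(x, y). d x y) ` (range g \<times> range g)) ((\<lambda>(x, y). \<rho> x y) ` (Y \<times> Y))"
    and hF: "\<And>x y. x \<in> range g \<Longrightarrow> y \<in> range g \<Longrightarrow> \<rho> (h x) (h y) = F (d x y)"
    using assms(3) unfolding cond_comb_def comb_similar_def by blast
  define y where "y a = h (g a)" for a
  have y_in: "y a \<in> Y" for a using bij_betw_apply[OF h] by (simp add: y_def)
  have \<rho>_y: "\<rho> (y a) (y b) = F (max_ultrametric q0 a b)" for a b
    using hF[of "g a" "g b"] \<open>inj g\<close> by (simp add: y_def d_def)
  have "q \<in> (\<lambda>(x, y). d x y) ` (range g \<times> range g)" for q
  proof -
    have "d (g q) (g q0) = q"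
      using \<open>inj g\<close> least by (simp add: d_def max_ultrametric_def max_def order_antisym)
    then show ?thesis by (intro image_eqI[of _ _ "(g q, g q0)"]) auto
  qed
  then have "inj F" using F by (metis bij_betw_imp_inj_on inj_on_subset subsetI)
  have "le_R0 (F a) (F b)" if "a \<le> b" for a b
  proof -
    consider "a = b" | "a = q0" "a < b" | "q0 < a" "a < b"
      using \<open>a \<le> b\<close> least by (metis order.not_eq_order_implies_strict)
    then show ?thesis
    proof cases
      case 1
      then show ?thesis by (simp add: le_R0_refl)
    next
      case 2
      have "F a = \<rho> (y q0) (y q0)" "F b = \<rho> (y b) (y q0)"
        using 2 least \<rho>_y by (auto simp: max_ultrametric_def max_def)
      then show ?thesis using \<rho> y_in by (simp add: pseudoultrametric_iff_ultra_triangle)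
    next
      case 3
      have "\<rho> (y a) (y b) = F b" "\<rho> (y q0) (y b) = F b" "\<rho> (y a) (y q0) = F a"
        using 3 \<rho>_y by (auto simp: max_ultrametric_def max_def)
      moreover have "F a \<noteq> F b" using 3 \<open>inj F\<close> by (auto dest: injD)
      ultimately show ?thesis
        using pseudoultrametric_isosceles_le[OF \<rho> y_in y_in y_in, of a b q0] by simp
    qed
  qed
  with \<open>inj F\<close> show ?thesis by (rule separable_order_topology_if_mono_inj_R0)
qed

theorem theorem4p20:
  assumes "\<exists>q0::'q::linorder. \<forall>q. q0 \<le> q"
    and "\<exists>a b::'q. a \<noteq> b"
  shows "(separable_topology (order_topology_of :: 'q topology) \<longrightarrow>
           cond_weak TYPE('x) TYPE('q) \<and> cond_comb TYPE('x) TYPE('q))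
       \<and> ((\<exists>g::'q \<Rightarrow> 'x. inj g) \<longrightarrow>
           (separable_topology (order_topology_of :: 'q topology) \<longleftrightarrow> cond_weak TYPE('x) TYPE('q)) \<and>
           (separable_topology (order_topology_of :: 'q topology) \<longleftrightarrow> cond_comb TYPE('x) TYPE('q)))"
proof -
  obtain q0 :: 'q where least: "\<And>q. q0 \<le> q" using assms(1) by blast
  have weak: "cond_weak TYPE('x) TYPE('q)"
    if "separable_topology (order_topology_of :: 'q topology)"
    using least that by (rule cond_weak_if_separable)
  have separable: "separable_topology (order_topology_of :: 'q topology)"
    if "inj (g :: 'q \<Rightarrow> 'x)" "cond_comb TYPE('x) TYPE('q)" for g
    using least that by (rule separable_if_cond_comb)
  show ?thesis using weak separable cond_comb_if_cond_weak by blast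
qed

end
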